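(* If $\sigma$ is a nonempty right closed subset of $\mathbb{R}$, then there exists a sequence $\{r_n\}_{n\ge1}$ whose right closure is $\sigma$.
   Context: A nonempty set $X\subseteq\mathbb{R}$ is right closed if $\sup Y\in X$ for every nonempty bounded $Y\subseteq X$. For nonempty $K\subseteq\mathbb{R}$, its right closure is $\lceil K\rceil=\{\sup\sigma':\emptyset\neq\sigma'\subseteq K,\ \sigma'\text{ bounded}\}$, the smallest right closed set containing $K$. *)

theory Defs
  imports Complex_Main
begin

definition right_closed :: "real set \<Rightarrow> bool" where
  "right_closed X \<longleftrightarrow> X \<noteq> {} \<and>
     (\<forall>Y. Y \<noteq> {} \<and> Y \<subseteq> X \<and> bdd_above Y \<and> bdd_below Y \<longrightarrow> Sup Y \<in> X)"

definition right_closure :: "real set \<Rightarrow> real set" where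
  "right_closure K = {Sup S | S. S \<noteq> {} \<and> S \<subseteq> K \<and> bdd_above S \<and> bdd_below S}"

end

theory Submission
  imports Defs "HOL-Library.Countable_Set"
begin

text \<open>
  A right closed set \<sigma> is the right closure of a countable subset, namely of the suprema
  of \<sigma> over the intervals (a, b] with rational endpoints together with the minima of \<sigma>
  over the rays (a, \<infinity>) with rational a. A point of \<sigma> that is isolated from the left is
  such a minimum; any other point x is approached from below by points of \<sigma>, hence by
  suprema over rational intervals lying arbitrarily close to the left of x, and so x is the
  supremum of those of them in [x - 1, x]. Enumerating the countable subset gives the sequence.
\<close>

lemma mem_right_closureI:
  assumes "S \<noteq> {}" "S \<subseteq> K" "bdd_above S" "bdd_below S"
  shows "Sup S \<in> right_closure K"
  using assms unfolding right_closure_def by blast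

lemma right_closed_Sup:
  assumes "right_closed \<sigma>" "S \<noteq> {}" "S \<subseteq> \<sigma>" "bdd_above S" "bdd_below S"
  shows "Sup S \<in> \<sigma>"
  using assms unfolding right_closed_def by blast

lemma right_closure_least:
  assumes "right_closed \<sigma>" "K \<subseteq> \<sigma>"
  shows "right_closure K \<subseteq> \<sigma>"
  using assms right_closed_Sup unfolding right_closure_def by blast

lemma mem_right_closure_if_approx_below:
  fixes x :: real
  assumes approx: "\<And>e. e < x \<Longrightarrow> \<exists>d\<in>D. e < d \<and> d \<le> x"
  shows "x \<in> right_closure D"
proof -
  let ?S = "D \<inter> {x - 1..x}"
  have "?S \<noteq> {}" using approx[of "x - 1"] by fastforce
  have "Sup ?S = x"
  proof (rule cSup_eq_non_empty)
    fix y assume ub: "\<And>d. d \<in> ?S \<Longrightarrow> d \<le> y"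
    show "x \<le> y"
    proof (rule ccontr)
      assume "\<not> x \<le> y"
      then obtain d where "d \<in> D" "max y (x - 1) < d" "d \<le> x"
        using approx[of "max y (x - 1)"] by auto
      then show False using ub[of d] by auto
    qed
  qed (use \<open>?S \<noteq> {}\<close> in auto)
  moreover have "Sup ?S \<in> right_closure D"
    using \<open>?S \<noteq> {}\<close> by (intro mem_right_closureI bdd_aboveI[of _ x] bdd_belowI[of _ "x - 1"]) auto
  ultimately show ?thesis by simp
qed

lemma right_closed_Sup_Int_greaterThanAtMost:
  assumes "right_closed \<sigma>" "y \<in> \<sigma>" "a < y" "y \<le> b"
  shows "Sup (\<sigma> \<inter> {a<..b}) \<in> \<sigma>" "a < Sup (\<sigma> \<inter> {a<..b})" "Sup (\<sigma> \<inter> {a<..b}) \<le> b"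
proof -
  let ?S = "\<sigma> \<inter> {a<..b}"
  have "?S \<noteq> {}" using assms by auto
  have "bdd_above ?S" by (rule bdd_aboveI[of _ b]) simp
  have "bdd_below ?S" by (rule bdd_belowI[of _ a]) simp
  show "Sup ?S \<in> \<sigma>"
    using right_closed_Sup[OF assms(1) \<open>?S \<noteq> {}\<close> _ \<open>bdd_above ?S\<close> \<open>bdd_below ?S\<close>] by simp
  have "y \<le> Sup ?S" using assms \<open>bdd_above ?S\<close> by (intro cSup_upper) auto
  then show "a < Sup ?S" using assms by simp
  show "Sup ?S \<le> b" using \<open>?S \<noteq> {}\<close> by (intro cSup_least) auto
qed

lemma Inf_Int_greaterThan_eq_left_isolated:
  fixes x :: real
  assumes "x \<in> \<sigma>" "a < x" "\<sigma> \<inter> {a<..<x} = {}"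
  shows "Inf (\<sigma> \<inter> {a<..}) = x"
proof (rule cInf_eq_minimum)
  fix y assume "y \<in> \<sigma> \<inter> {a<..}"
  with assms(3) show "x \<le> y" by (auto simp: not_le[symmetric])
qed (use assms in auto)

text \<open>Intersecting with \<sigma> discards the junk values of Sup and Inf on empty or unbounded sets.\<close>

definition right_closed_skeleton :: "real set \<Rightarrow> real set" where
  "right_closed_skeleton \<sigma> =
     ((\<lambda>(a, b). Sup (\<sigma> \<inter> {a<..b})) ` (\<rat> \<times> \<rat>) \<union> (\<lambda>a. Inf (\<sigma> \<inter> {a<..})) ` \<rat>) \<inter> \<sigma>"

lemma countable_right_closed_skeleton: "countable (right_closed_skeleton \<sigma>)"
  unfolding right_closed_skeleton_def
  by (intro countable_Int1 countable_Un countable_image countable_SIGMA countable_rat)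

lemma right_closed_skeleton_subset: "right_closed_skeleton \<sigma> \<subseteq> \<sigma>"
  unfolding right_closed_skeleton_def by blast

lemma subset_right_closure_right_closed_skeleton:
  assumes rc: "right_closed \<sigma>"
  shows "\<sigma> \<subseteq> right_closure (right_closed_skeleton \<sigma>)"
proof
  fix x assume x: "x \<in> \<sigma>"
  show "x \<in> right_closure (right_closed_skeleton \<sigma>)"
  proof (cases "\<exists>a\<in>\<rat>. a < x \<and> \<sigma> \<inter> {a<..<x} = {}")
    case True
    then obtain a where a: "a \<in> \<rat>" "a < x" "\<sigma> \<inter> {a<..<x} = {}" by blast
    then have "x \<in> right_closed_skeleton \<sigma>"
      using x Inf_Int_greaterThan_eq_left_isolated[OF x a(2,3)]
      unfolding right_closed_skeleton_def by (auto intro!: image_eqI[of _ _ a])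
    then show ?thesis using mem_right_closureI[of "{x}"] by simp
  next
    case False
    show ?thesis
    proof (rule mem_right_closure_if_approx_below)
      fix e assume "e < x"
      then obtain a where a: "a \<in> \<rat>" "e < a" "a < x" using Rats_dense_in_real by blast
      with False have "\<sigma> \<inter> {a<..<x} \<noteq> {}" by blast
      then obtain y where y: "y \<in> \<sigma>" "a < y" "y < x" by auto
      obtain b where b: "b \<in> \<rat>" "y < b" "b < x" using Rats_dense_in_real[OF \<open>y < x\<close>] by blast
      let ?s = "Sup (\<sigma> \<inter> {a<..b})"
      have s: "?s \<in> \<sigma>" "a < ?s" "?s \<le> b"
        using right_closed_Sup_Int_greaterThanAtMost[OF rc y(1,2)] b by auto
      then have "?s \<in> right_closed_skeleton \<sigma>"
        unfolding right_closed_skeleton_def using a b by (auto intro!: image_eqI[of _ _ "(a, b)"])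
      moreover have "e < ?s" "?s \<le> x" using s a b by linarith+
      ultimately show "\<exists>d\<in>right_closed_skeleton \<sigma>. e < d \<and> d \<le> x" by blast
    qed
  qed
qed

lemma right_closure_right_closed_skeleton:
  assumes "right_closed \<sigma>"
  shows "right_closure (right_closed_skeleton \<sigma>) = \<sigma>"
  using right_closure_least[OF assms right_closed_skeleton_subset]
    subset_right_closure_right_closed_skeleton[OF assms] by (rule equalityI)

lemma countable_eq_image_atLeast_1:
  assumes "countable D" "D \<noteq> {}"
  shows "\<exists>r :: nat \<Rightarrow> 'a. r ` {1..} = D"
proof
  let ?r = "\<lambda>n. from_nat_into D (n - 1)"
  show "?r ` {1..} = D"
  proof (intro equalityI subsetI)
    fix d assume "d \<in> D"
    then have "d = ?r (Suc (to_nat_on D d))"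
      using from_nat_into_to_nat_on[OF assms(1)] by simp
    then show "d \<in> ?r ` {1..}" by (rule image_eqI) simp
  qed (use from_nat_into[OF assms(2)] in auto)
qed

theorem lemma3p7:
  fixes \<sigma> :: "real set"
  assumes "\<sigma> \<noteq> {}" and "right_closed \<sigma>"
  shows "\<exists>r :: nat \<Rightarrow> real. right_closure (r ` {1..}) = \<sigma>"
proof -
  have "right_closure (right_closed_skeleton \<sigma>) \<noteq> {}"
    using assms right_closure_right_closed_skeleton by simp
  then have "right_closed_skeleton \<sigma> \<noteq> {}"
    unfolding right_closure_def by auto
  then obtain r :: "nat \<Rightarrow> real" where "r ` {1..} = right_closed_skeleton \<sigma>"
    using countable_eq_image_atLeast_1[OF countable_right_closed_skeleton] by blast
  then show ?thesis
    using right_closure_right_closed_skeleton[OF assms(2)] by (intro exI[of _ r]) simp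
qed

end
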